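(* Let $G$ be a graph of diameter $3$. Then $\chi_{ei}(G)\ge \rho(G)\ge \gamma_2(G)$. Moreover, there are graphs of diameter $3$ for which both equalities hold.
   Context: All graphs are finite and simple. A path $P_4$ in $G$ is a sequence $uxyv$ of four distinct vertices with $ux,xy,yv\in E(G)$; $u,v$ are its end vertices. An $e$-injective $k$-coloring of $G$ is a function $f:V(G)\to\{1,\dots,k\}$ with $f(u)\ne f(v)$ whenever $u,v$ are the end vertices of some path $P_4$ in $G$; $\chi_{ei}(G)$ is the least such $k$. A set $B\subseteq V(G)$ is a packing if $N[u]\cap N[v]=\emptyset$ for all distinct $u,v\in B$ (where $N[v]$ is the closed neighborhood); the packing number $\rho(G)$ is the maximum size of a packing. A set $D\subseteq V(G)$ is a 2-distance dominating set if every vertex not in $D$ is at distance at most $2$ from some vertex of $D$; $\gamma_2(G)$ is the minimum size of such a set. *)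

theory Defs
  imports Main
begin

definition graph :: "'a set \<Rightarrow> ('a \<Rightarrow> 'a \<Rightarrow> bool) \<Rightarrow> bool" where
  "graph V E \<longleftrightarrow> finite V \<and> (\<forall>u v. E u v \<longrightarrow> u \<in> V \<and> v \<in> V)
     \<and> (\<forall>u v. E u v \<longrightarrow> E v u) \<and> (\<forall>u. \<not> E u u)"

fun within :: "('a \<Rightarrow> 'a \<Rightarrow> bool) \<Rightarrow> nat \<Rightarrow> 'a \<Rightarrow> 'a \<Rightarrow> bool" where
  "within E 0 u v \<longleftrightarrow> u = v"
| "within E (Suc n) u v \<longleftrightarrow> u = v \<or> (\<exists>w. E u w \<and> within E n w v)"

definition connected_graph :: "'a set \<Rightarrow> ('a \<Rightarrow> 'a \<Rightarrow> bool) \<Rightarrow> bool" where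
  "connected_graph V E \<longleftrightarrow> V \<noteq> {} \<and> (\<forall>u\<in>V. \<forall>v\<in>V. \<exists>n. within E n u v)"

definition gdist :: "('a \<Rightarrow> 'a \<Rightarrow> bool) \<Rightarrow> 'a \<Rightarrow> 'a \<Rightarrow> nat" where
  "gdist E u v = (LEAST n. within E n u v)"

definition diameter :: "'a set \<Rightarrow> ('a \<Rightarrow> 'a \<Rightarrow> bool) \<Rightarrow> nat" where
  "diameter V E = Max {gdist E u v | u v. u \<in> V \<and> v \<in> V}"

definition has_diameter :: "'a set \<Rightarrow> ('a \<Rightarrow> 'a \<Rightarrow> bool) \<Rightarrow> nat \<Rightarrow> bool" where
  "has_diameter V E d \<longleftrightarrow> connected_graph V E \<and> diameter V E = d"

definition P4_ends :: "('a \<Rightarrow> 'a \<Rightarrow> bool) \<Rightarrow> 'a \<Rightarrow> 'a \<Rightarrow> bool" where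
  "P4_ends E u v \<longleftrightarrow> (\<exists>x y. distinct [u, x, y, v] \<and> E u x \<and> E x y \<and> E y v)"

definition ei_coloring :: "'a set \<Rightarrow> ('a \<Rightarrow> 'a \<Rightarrow> bool) \<Rightarrow> nat \<Rightarrow> ('a \<Rightarrow> nat) \<Rightarrow> bool" where
  "ei_coloring V E k f \<longleftrightarrow> (\<forall>v\<in>V. f v \<in> {1..k})
     \<and> (\<forall>u\<in>V. \<forall>v\<in>V. P4_ends E u v \<longrightarrow> f u \<noteq> f v)"

definition chi_ei :: "'a set \<Rightarrow> ('a \<Rightarrow> 'a \<Rightarrow> bool) \<Rightarrow> nat" where
  "chi_ei V E = (LEAST k. \<exists>f. ei_coloring V E k f)"

definition closed_nbhd :: "('a \<Rightarrow> 'a \<Rightarrow> bool) \<Rightarrow> 'a \<Rightarrow> 'a set" where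
  "closed_nbhd E v = insert v {u. E v u}"

definition packing :: "'a set \<Rightarrow> ('a \<Rightarrow> 'a \<Rightarrow> bool) \<Rightarrow> 'a set \<Rightarrow> bool" where
  "packing V E B \<longleftrightarrow> B \<subseteq> V \<and>
     (\<forall>u\<in>B. \<forall>v\<in>B. u \<noteq> v \<longrightarrow> closed_nbhd E u \<inter> closed_nbhd E v = {})"

definition packing_number :: "'a set \<Rightarrow> ('a \<Rightarrow> 'a \<Rightarrow> bool) \<Rightarrow> nat" where
  "packing_number V E = Max {card B | B. packing V E B}"

definition dist2_dominating :: "'a set \<Rightarrow> ('a \<Rightarrow> 'a \<Rightarrow> bool) \<Rightarrow> 'a set \<Rightarrow> bool" where
  "dist2_dominating V E D \<longleftrightarrow> D \<subseteq> V \<and>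
     (\<forall>v\<in>V - D. \<exists>u\<in>D. gdist E u v \<le> 2)"

definition gamma2 :: "'a set \<Rightarrow> ('a \<Rightarrow> 'a \<Rightarrow> bool) \<Rightarrow> nat" where
  "gamma2 V E = (LEAST k. \<exists>D. dist2_dominating V E D \<and> card D = k)"

end

theory Submission
  imports Defs
begin

text \<open>In a graph of diameter at most 3, two distinct vertices of a packing are at distance
exactly 3, so they are the ends of a \<open>P\<^sub>4\<close> and receive distinct colours in every
e-injective colouring; hence \<open>\<chi>\<^sub>e\<^sub>i \<ge> \<rho>\<close>. A maximum packing cannot be
enlarged, so every vertex outside it has a closed neighbourhood meeting that of a packing vertex,
i.e. lies within distance 2 of it; hence \<open>\<rho> \<ge> \<gamma>\<^sub>2\<close> in every graph. The 6-cycle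
attains both bounds: its only \<open>P\<^sub>4\<close>'s join antipodal vertices, so two colours suffice,
while no single vertex is within distance 2 of its antipode.\<close>

lemma within_mono: "within E n u v \<Longrightarrow> n \<le> m \<Longrightarrow> within E m u v"
proof (induction n arbitrary: m u)
  case 0
  then show ?case by (cases m) auto
next
  case (Suc n)
  then obtain m' where "m = Suc m'" by (cases m) auto
  with Suc show ?case by auto
qed

lemma gdist_le: "within E n u v \<Longrightarrow> gdist E u v \<le> n"
  unfolding gdist_def by (rule Least_le)

lemma within_gdist: "within E n u v \<Longrightarrow> within E (gdist E u v) u v"
  unfolding gdist_def by (rule LeastI)

lemma gdist_le_diameter:
  assumes "graph V E" and "u \<in> V" and "v \<in> V"
  shows "gdist E u v \<le> diameter V E"
proof -
  have "finite {gdist E u v | u v. u \<in> V \<and> v \<in> V}"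
    using assms(1) unfolding graph_def by (intro finite_image_set2) auto
  then show ?thesis
    unfolding diameter_def using assms(2,3) by (intro Max_ge) auto
qed

lemma within_diameter:
  assumes "graph V E" and "connected_graph V E" and "u \<in> V" and "v \<in> V"
  shows "within E (diameter V E) u v"
proof -
  from assms(2-4) obtain n where "within E n u v"
    unfolding connected_graph_def by blast
  then have "within E (gdist E u v) u v" by (rule within_gdist)
  then show ?thesis using gdist_le_diameter[OF assms(1,3,4)] by (rule within_mono)
qed

lemma within_2_if_closed_nbhds_meet:
  assumes "graph V E" and "closed_nbhd E u \<inter> closed_nbhd E v \<noteq> {}"
  shows "within E 2 u v"
proof -
  have sym: "\<And>a b. E a b \<Longrightarrow> E b a" using assms(1) unfolding graph_def by auto
  from assms(2) obtain w where "w \<in> closed_nbhd E u" and "w \<in> closed_nbhd E v" by blast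
  with sym show ?thesis unfolding closed_nbhd_def by (auto simp: numeral_eq_Suc)
qed

lemma P4_ends_if_within_3:
  assumes "graph V E" and "within E 3 u v" and "u \<noteq> v"
    and disjoint: "closed_nbhd E u \<inter> closed_nbhd E v = {}"
  shows "P4_ends E u v"
proof -
  have sym: "\<And>a b. E a b \<Longrightarrow> E b a" and irrefl: "\<And>a. \<not> E a a"
    using assms(1) unfolding graph_def by auto
  have not_uv: "\<not> E u v" and no_common: "\<And>x. E u x \<Longrightarrow> E x v \<Longrightarrow> False"
    using disjoint sym unfolding closed_nbhd_def by auto
  from assms(2,3) obtain x where ux: "E u x" and "within E 2 x v"
    by (auto simp: numeral_eq_Suc)
  with not_uv obtain y where xy: "E x y" and "within E 1 y v"
    by (auto simp: numeral_eq_Suc)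
  with no_common ux have yv: "E y v" by auto
  have "distinct [u, x, y, v]"
    using ux xy yv irrefl not_uv no_common sym assms(3) by auto
  with ux xy yv show ?thesis unfolding P4_ends_def by blast
qed

lemma packing_P4_ends:
  assumes "graph V E" and "connected_graph V E" and "diameter V E \<le> 3"
    and "packing V E B" and "u \<in> B" and "v \<in> B" and "u \<noteq> v"
  shows "P4_ends E u v"
proof (rule P4_ends_if_within_3[OF assms(1) _ assms(7)])
  have "u \<in> V" and "v \<in> V" using assms(4-6) unfolding packing_def by auto
  with assms(1,2) have "within E (diameter V E) u v" by (rule within_diameter)
  then show "within E 3 u v" using assms(3) by (rule within_mono)
  show "closed_nbhd E u \<inter> closed_nbhd E v = {}"
    using assms(4-7) unfolding packing_def by auto
qed

lemma finite_packing_cards: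
  assumes "finite V"
  shows "finite {card B | B. packing V E B}"
proof (rule finite_subset)
  show "{card B | B. packing V E B} \<subseteq> card ` Pow V" unfolding packing_def by auto
  show "finite (card ` Pow V)" using assms by simp
qed

lemma packing_number_attained:
  assumes "finite V"
  obtains B where "packing V E B" and "card B = packing_number V E"
proof -
  have "{card B | B. packing V E B} \<noteq> {}" unfolding packing_def by auto
  then have "packing_number V E \<in> {card B | B. packing V E B}"
    unfolding packing_number_def using finite_packing_cards[OF assms] by (rule Max_in[rotated])
  then obtain B where "packing V E B" and "packing_number V E = card B" by blast
  with that show ?thesis by simp
qed

lemma card_le_packing_number:
  "finite V \<Longrightarrow> packing V E B \<Longrightarrow> card B \<le> packing_number V E"
  unfolding packing_number_def by (intro Max_ge finite_packing_cards) auto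

lemma ex_ei_coloring_card:
  assumes "finite V"
  shows "\<exists>f. ei_coloring V E (card V) f"
proof -
  obtain h where "bij_betw h {1..card V} V"
    using ex_bij_betw_nat_finite_1[OF assms] by blast
  then have bij: "bij_betw (inv_into {1..card V} h) V {1..card V}" by (rule bij_betw_inv_into)
  have "ei_coloring V E (card V) (inv_into {1..card V} h)"
    unfolding ei_coloring_def
  proof (intro conjI ballI impI)
    show "inv_into {1..card V} h v \<in> {1..card V}" if "v \<in> V" for v
      using bij that by (rule bij_betw_apply)
    fix u v assume "u \<in> V" "v \<in> V" "P4_ends E u v"
    moreover from this(3) have "u \<noteq> v" unfolding P4_ends_def by auto
    ultimately show "inv_into {1..card V} h u \<noteq> inv_into {1..card V} h v"
      using bij unfolding bij_betw_def by (auto dest: inj_onD)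
  qed
  then show ?thesis by blast
qed

lemma chi_ei_attained:
  assumes "finite V"
  obtains f where "ei_coloring V E (chi_ei V E) f"
proof -
  have "\<exists>f. ei_coloring V E (chi_ei V E) f"
    unfolding chi_ei_def using ex_ei_coloring_card[OF assms] by (rule LeastI)
  with that show ?thesis by blast
qed

lemma card_le_if_ei_coloring:
  assumes f: "ei_coloring V E k f" and "B \<subseteq> V"
    and P4: "\<And>u v. u \<in> B \<Longrightarrow> v \<in> B \<Longrightarrow> u \<noteq> v \<Longrightarrow> P4_ends E u v"
  shows "card B \<le> k"
proof -
  have inj: "inj_on f B"
  proof (rule inj_onI, rule ccontr)
    fix u v assume "u \<in> B" "v \<in> B" "f u = f v" "u \<noteq> v"
    with P4 f \<open>B \<subseteq> V\<close> show False unfolding ei_coloring_def by blast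
  qed
  have "f ` B \<subseteq> {1..k}" using assms(1,2) unfolding ei_coloring_def by auto
  from card_inj_on_le[OF inj this] show ?thesis by simp
qed

theorem packing_number_le_chi_ei:
  assumes "graph V E" and "connected_graph V E" and "diameter V E \<le> 3"
  shows "packing_number V E \<le> chi_ei V E"
proof -
  have fin: "finite V" using assms(1) unfolding graph_def by simp
  obtain B where B: "packing V E B" and card_B: "card B = packing_number V E"
    using fin by (rule packing_number_attained)
  obtain f where f: "ei_coloring V E (chi_ei V E) f"
    using fin by (rule chi_ei_attained)
  have "B \<subseteq> V" using B unfolding packing_def by simp
  from f this packing_P4_ends[OF assms B] have "card B \<le> chi_ei V E"
    by (rule card_le_if_ei_coloring)
  with card_B show ?thesis by simp
qed

lemma dist2_dominating_if_maximal_packing: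
  assumes "graph V E" and packing: "packing V E B"
    and maximal: "\<And>v. v \<in> V - B \<Longrightarrow> \<not> packing V E (insert v B)"
  shows "dist2_dominating V E B"
  unfolding dist2_dominating_def
proof (intro conjI ballI)
  show "B \<subseteq> V" using packing unfolding packing_def by simp
  fix v assume v: "v \<in> V - B"
  show "\<exists>u\<in>B. gdist E u v \<le> 2"
  proof (rule ccontr)
    assume far: "\<not> (\<exists>u\<in>B. gdist E u v \<le> 2)"
    have disjoint: "closed_nbhd E u \<inter> closed_nbhd E v = {}" if "u \<in> B" for u
    proof (rule ccontr)
      assume "closed_nbhd E u \<inter> closed_nbhd E v \<noteq> {}"
      with assms(1) have "within E 2 u v" by (rule within_2_if_closed_nbhds_meet)
      then have "gdist E u v \<le> 2" by (rule gdist_le)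
      with far that show False by blast
    qed
    have "packing V E (insert v B)"
      unfolding packing_def
    proof (intro conjI ballI impI)
      show "insert v B \<subseteq> V" using v \<open>B \<subseteq> V\<close> by blast
      fix a b assume "a \<in> insert v B" and "b \<in> insert v B" and "a \<noteq> b"
      then consider "a = v" "b \<in> B" | "a \<in> B" "b = v" | "a \<in> B" "b \<in> B" by blast
      then show "closed_nbhd E a \<inter> closed_nbhd E b = {}"
      proof cases
        case 1
        then show ?thesis using disjoint[of b] by (simp add: inf_commute)
      next
        case 2
        then show ?thesis using disjoint[of a] by simp
      next
        case 3
        then show ?thesis using packing \<open>a \<noteq> b\<close> unfolding packing_def by blast
      qed
    qed
    with maximal v show False by blast
  qed
qed

lemma gamma2_le: "dist2_dominating V E D \<Longrightarrow> gamma2 V E \<le> card D"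
  unfolding gamma2_def by (intro Least_le) blast

theorem gamma2_le_packing_number:
  assumes "graph V E"
  shows "gamma2 V E \<le> packing_number V E"
proof -
  have fin: "finite V" using assms unfolding graph_def by simp
  then obtain B where B: "packing V E B" and card_B: "card B = packing_number V E"
    by (rule packing_number_attained)
  have "finite B" using B fin unfolding packing_def by (blast intro: finite_subset)
  have "\<not> packing V E (insert v B)" if "v \<in> V - B" for v
  proof
    assume "packing V E (insert v B)"
    with fin have "card (insert v B) \<le> packing_number V E" by (rule card_le_packing_number)
    with \<open>finite B\<close> that card_B show False by simp
  qed
  with assms B have "dist2_dominating V E B" by (rule dist2_dominating_if_maximal_packing)
  then have "gamma2 V E \<le> card B" by (rule gamma2_le)
  with card_B show ?thesis by simp
qed

definition C6_V :: "nat set" where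
  "C6_V = {0..<6}"

text \<open>The predecessor of \<open>u\<close> on the cycle is written \<open>(u + 5) mod 6\<close> to avoid truncated
subtraction.\<close>
definition C6_E :: "nat \<Rightarrow> nat \<Rightarrow> bool" where
  "C6_E u v \<longleftrightarrow> u < 6 \<and> (v = (u + 1) mod 6 \<or> v = (u + 5) mod 6)"

lemma less_6_cases: "(u::nat) < 6 \<Longrightarrow> u = 0 \<or> u = 1 \<or> u = 2 \<or> u = 3 \<or> u = 4 \<or> u = 5"
  by auto

lemma C6_graph: "graph C6_V C6_E"
  unfolding graph_def C6_V_def C6_E_def by (auto dest!: less_6_cases)

lemma within_C6_Suc: "within C6_E (Suc n) u v \<longleftrightarrow> u = v \<or> (u < 6 \<and>
   (within C6_E n ((u + 1) mod 6) v \<or> within C6_E n ((u + 5) mod 6) v))"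
  by (auto simp: C6_E_def)

lemma C6_within_3: "u < 6 \<Longrightarrow> v < 6 \<Longrightarrow> within C6_E 3 u v"
  unfolding numeral_3_eq_3 using less_6_cases[of u] less_6_cases[of v]
  by (auto simp del: within.simps(2) simp add: within_C6_Suc)

lemma C6_gdist_antipode: "u < 6 \<Longrightarrow> gdist C6_E u ((u + 3) mod 6) = 3"
proof -
  assume u: "u < 6"
  have w: "within C6_E 3 u ((u + 3) mod 6)" using C6_within_3 u by simp
  have "\<not> within C6_E 2 u ((u + 3) mod 6)"
    unfolding numeral_2_eq_2 using less_6_cases[OF u]
    by (auto simp del: within.simps(2) simp add: within_C6_Suc)
  then have "\<not> gdist C6_E u ((u + 3) mod 6) \<le> 2"
    using within_mono[OF within_gdist[OF w]] by blast
  with gdist_le[OF w] show ?thesis by simp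
qed

lemma C6_diameter: "has_diameter C6_V C6_E 3"
proof -
  have "connected_graph C6_V C6_E"
    unfolding connected_graph_def C6_V_def
  proof (intro conjI ballI)
    fix u v :: nat assume "u \<in> {0..<6}" and "v \<in> {0..<6}"
    then show "\<exists>n. within C6_E n u v" by (intro exI[of _ 3] C6_within_3) auto
  qed simp
  moreover have "diameter C6_V C6_E = 3"
    unfolding diameter_def
  proof (rule Max_eqI)
    show "finite {gdist C6_E u v | u v. u \<in> C6_V \<and> v \<in> C6_V}"
      by (intro finite_image_set2) (auto simp: C6_V_def)
    show "x \<le> 3" if "x \<in> {gdist C6_E u v | u v. u \<in> C6_V \<and> v \<in> C6_V}" for x
      using that C6_within_3 gdist_le unfolding C6_V_def by fastforce
    have "gdist C6_E 0 3 = 3" using C6_gdist_antipode[of 0] by simp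
    then show "3 \<in> {gdist C6_E u v | u v. u \<in> C6_V \<and> v \<in> C6_V}"
      unfolding C6_V_def by force
  qed
  ultimately show ?thesis unfolding has_diameter_def by simp
qed

lemma C6_P4_ends_antipodal: "P4_ends C6_E u v \<Longrightarrow> u < 6 \<and> v = (u + 3) mod 6"
proof -
  assume "P4_ends C6_E u v"
  then obtain x y where "distinct [u, x, y, v]" and "C6_E u x" "C6_E x y" "C6_E y v"
    unfolding P4_ends_def by blast
  moreover from \<open>C6_E u x\<close> have "u < 6" by (simp add: C6_E_def)
  ultimately show ?thesis using less_6_cases[of u] by (auto simp: C6_E_def)
qed

lemma C6_chi_ei_le_2: "chi_ei C6_V C6_E \<le> 2"
proof -
  define f :: "nat \<Rightarrow> nat" where "f v = (if v < 3 then 1 else 2)" for v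
  have "ei_coloring C6_V C6_E 2 f"
    unfolding ei_coloring_def
  proof (intro conjI ballI impI)
    show "f v \<in> {1..2}" for v by (simp add: f_def)
    fix u v assume "P4_ends C6_E u v"
    then show "f u \<noteq> f v"
      by (auto simp: f_def dest!: C6_P4_ends_antipodal less_6_cases)
  qed
  then show ?thesis unfolding chi_ei_def by (intro Least_le) blast
qed

lemma C6_dist2_dominating_card: "dist2_dominating C6_V C6_E D \<Longrightarrow> 2 \<le> card D"
proof (rule ccontr)
  assume D: "dist2_dominating C6_V C6_E D" and "\<not> 2 \<le> card D"
  have "finite D" using D unfolding dist2_dominating_def C6_V_def by (blast intro: finite_subset)
  with \<open>\<not> 2 \<le> card D\<close> consider "D = {}" | u where "D = {u}"
    by (metis One_nat_def card_1_singletonE card_0_eq less_2_cases not_less)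
  then show False
  proof cases
    case 1
    then have "0 \<in> C6_V - D" by (simp add: C6_V_def)
    with D 1 show False unfolding dist2_dominating_def by blast
  next
    case (2 u)
    with D have u: "u < 6" unfolding dist2_dominating_def C6_V_def by auto
    with 2 have "(u + 3) mod 6 \<in> C6_V - D" by (auto simp: C6_V_def dest!: less_6_cases)
    with D 2 have "gdist C6_E u ((u + 3) mod 6) \<le> 2"
      unfolding dist2_dominating_def by blast
    with C6_gdist_antipode[OF u] show False by simp
  qed
qed

lemma C6_gamma2_ge_2: "2 \<le> gamma2 C6_V C6_E"
  unfolding gamma2_def
proof (rule LeastI2_ex)
  show "\<exists>k D. dist2_dominating C6_V C6_E D \<and> card D = k"
    unfolding dist2_dominating_def by blast
qed (use C6_dist2_dominating_card in blast)

theorem proposition2p7: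
  shows "(\<forall>(V :: 'a set) E. graph V E \<and> has_diameter V E 3 \<longrightarrow>
            chi_ei V E \<ge> packing_number V E \<and> packing_number V E \<ge> gamma2 V E)
       \<and> (\<exists>(V :: nat set) E. graph V E \<and> has_diameter V E 3 \<and>
            chi_ei V E = packing_number V E \<and> packing_number V E = gamma2 V E)"
proof
  show "\<forall>(V :: 'a set) E. graph V E \<and> has_diameter V E 3 \<longrightarrow>
            chi_ei V E \<ge> packing_number V E \<and> packing_number V E \<ge> gamma2 V E"
    using packing_number_le_chi_ei gamma2_le_packing_number
    unfolding has_diameter_def by fastforce
  have "packing_number C6_V C6_E \<le> chi_ei C6_V C6_E"
    using packing_number_le_chi_ei[OF C6_graph] C6_diameter unfolding has_diameter_def by simp
  moreover have "gamma2 C6_V C6_E \<le> packing_number C6_V C6_E"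
    by (rule gamma2_le_packing_number[OF C6_graph])
  ultimately show "\<exists>(V :: nat set) E. graph V E \<and> has_diameter V E 3 \<and>
            chi_ei V E = packing_number V E \<and> packing_number V E = gamma2 V E"
    using C6_graph C6_diameter C6_chi_ei_le_2 C6_gamma2_ge_2 by (intro exI[of _ C6_V] exI[of _ C6_E]) simp
qed

end
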